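(* Let $a>0$ and let $L\ge0$ be an integer such that $p_m:=\dfrac12+\dfrac{a}{(m+1)(\log(m+1))^2}<1$ for all $m\geq L+1$, and set $q_m=1-p_m$. Then the quantity \[ \left[1+\frac{p_k}{q_k}+\frac{p_kp_{k-1}}{q_kq_{k-1}}+\cdots+\frac{p_k\cdots p_{L+1}}{q_k\cdots q_{L+1}}\right]\cdot\left[1+\frac{q_{L+1}}{p_{L+1}}+\frac{q_{L+1}q_{L+2}}{p_{L+1}p_{L+2}}+\cdots+\frac{q_{L+1}\cdots q_k}{p_{L+1}\cdots p_k}\right]^{-1} \] stays bounded as $k\to\infty$. Equivalently, for the nearest-neighbour Markov chain $Y_n$ on $\{L,L+1,\dots\}$ stopped at $L$ with up-probabilities $p_m$, the product of the probability that $Y$ started at $L+1$ hits $k+1$ before $L$ and the expected number of upcrossings from $k$ to $k+1$ of $Y$ started at $k$ is bounded uniformly in $k$.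
   Context: Upcrossings from $k$ to $k+1$ of a chain started at $k$: the number of times the chain, after being at $k$, subsequently hits $k+1$ before being stopped at $L$ (counted via alternating hitting times of $k+1$ and $k$). *)

theory Defs
  imports Complex_Main
begin

definition pp :: "real \<Rightarrow> nat \<Rightarrow> real" where
  "pp a m = 1/2 + a / ((real m + 1) * (ln (real m + 1))^2)"

definition qq :: "real \<Rightarrow> nat \<Rightarrow> real" where
  "qq a m = 1 - pp a m"

definition bracket1 :: "real \<Rightarrow> nat \<Rightarrow> nat \<Rightarrow> real" where
  "bracket1 a L k = (\<Sum>j=0..k-L. \<Prod>m\<in>{k+1-j..k}. pp a m / qq a m)"

definition bracket2 :: "real \<Rightarrow> nat \<Rightarrow> nat \<Rightarrow> real" where
  "bracket2 a L k = (\<Sum>j=0..k-L. \<Prod>m\<in>{L+1..L+j}. qq a m / pp a m)"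

end

theory Submission
  imports Defs
begin

(* Write r_m = p_m / q_m for the odds of an up-step. Both brackets are sums over i = L..k, the
   first of the tail products r_{i+1}...r_k, the second of the head products
   (r_{L+1}...r_i)^{-1}. Splitting r_{L+1}...r_k at i shows that every term of the first sum is
   r_{L+1}...r_k times the corresponding term of the second, so the quotient of the brackets is
   exactly the full product r_{L+1}...r_k (an identity valid in any field).
   It remains to bound this product. Writing p_m = 1/2 + e_m, the elementary inequality
   (1/2 + e)/(1/2 - e) <= exp (8 e) for 0 <= e <= 1/4 reduces the tail of the product to
   exp (8 * sum of e_m), and the series of 1/((m+1) ln(m+1)^2) is bounded by telescoping
   against 1/ln m. The finitely many factors below the threshold M form a constant. *)

definition odds :: "real \<Rightarrow> nat \<Rightarrow> real" where
  "odds a m = pp a m / qq a m"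

lemma bracket1_reindex:
  assumes "L \<le> k"
  shows "bracket1 a L k = (\<Sum>i=L..k. \<Prod>m\<in>{i+1..k}. odds a m)"
  unfolding bracket1_def odds_def
  by (rule sum.reindex_bij_witness[where i="\<lambda>i. k-i" and j="\<lambda>j. k-j"])
     (use assms in \<open>auto simp: Suc_diff_le\<close>)

lemma bracket2_reindex:
  assumes "L \<le> k"
  shows "bracket2 a L k = (\<Sum>i=L..k. \<Prod>m\<in>{L+1..i}. inverse (odds a m))"
  unfolding bracket2_def odds_def
  by (rule sum.reindex_bij_witness[where i="\<lambda>i. i-L" and j="\<lambda>j. L+j"])
     (use assms in auto)

lemma prod_interval_split:
  fixes f :: "nat \<Rightarrow> 'a::comm_monoid_mult"
  assumes "L \<le> i" "i \<le> k"
  shows "prod f {L+1..k} = prod f {L+1..i} * prod f {i+1..k}"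
proof -
  have "{L+1..k} = {L+1..i} \<union> {i+1..k}" using assms by auto
  thus ?thesis by (simp add: prod.union_disjoint[symmetric] ivl_disj_int)
qed

lemma sum_tail_products:
  fixes r :: "nat \<Rightarrow> 'a::field"
  assumes nz: "\<And>m. m \<in> {L+1..k} \<Longrightarrow> r m \<noteq> 0"
  shows "(\<Sum>i=L..k. \<Prod>m\<in>{i+1..k}. r m)
         = (\<Prod>m\<in>{L+1..k}. r m) * (\<Sum>i=L..k. \<Prod>m\<in>{L+1..i}. inverse (r m))"
  unfolding sum_distrib_left
proof (rule sum.cong)
  fix i assume i: "i \<in> {L..k}"
  have head_nz: "(\<Prod>m\<in>{L+1..i}. r m) \<noteq> 0" using nz i by (simp add: prod_zero_iff)
  have split: "prod r {L+1..k} = prod r {L+1..i} * prod r {i+1..k}"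
    using i by (intro prod_interval_split) auto
  have "(\<Prod>m\<in>{L+1..k}. r m) * (\<Prod>m\<in>{L+1..i}. inverse (r m))
        = (\<Prod>m\<in>{i+1..k}. r m) * ((\<Prod>m\<in>{L+1..i}. r m) * inverse (\<Prod>m\<in>{L+1..i}. r m))"
    by (simp only: split prod_inversef[symmetric] comp_def mult_ac)
  also have "\<dots> = (\<Prod>m\<in>{i+1..k}. r m)" using head_nz by simp
  finally show "(\<Prod>m\<in>{i+1..k}. r m) = (\<Prod>m\<in>{L+1..k}. r m) * (\<Prod>m\<in>{L+1..i}. inverse (r m))"
    by simp
qed simp

lemma odds_ge_1:
  assumes "a > 0" "pp a m < 1"
  shows "odds a m \<ge> 1"
proof -
  have p: "pp a m \<ge> 1/2" unfolding pp_def using assms(1) by (simp add: zero_le_mult_iff)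
  have q: "qq a m > 0" unfolding qq_def using assms(2) by simp
  show ?thesis using p q unfolding odds_def qq_def by (simp add: field_simps)
qed

lemma bracket_ratio:
  assumes "a > 0" "\<forall>m\<ge>L+1. pp a m < 1" "L \<le> k"
  shows "bracket1 a L k / bracket2 a L k = (\<Prod>m\<in>{L+1..k}. odds a m)"
proof -
  have pos: "odds a m > 0" if "m \<in> {L+1..k}" for m
    using odds_ge_1[OF assms(1), of m] assms(2) that by force
  have b1: "bracket1 a L k = (\<Prod>m\<in>{L+1..k}. odds a m) * bracket2 a L k"
    unfolding bracket1_reindex[OF assms(3)] bracket2_reindex[OF assms(3)]
    by (rule sum_tail_products) (use pos in force)
  have "bracket2 a L k > 0"
    unfolding bracket2_reindex[OF assms(3)]
    by (intro sum_pos prod_pos) (use pos assms(3) in auto)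
  thus ?thesis using b1 by simp
qed

text \<open>Odds of a slightly biased coin: (1/2 + e)/(1/2 - e) \<le> 1 + 8e \<le> exp (8e) for e \<le> 1/4.\<close>

lemma biased_odds_le_exp:
  fixes e :: real
  assumes "0 \<le> e" "e \<le> 1/4"
  shows "(1/2 + e) / (1/2 - e) \<le> exp (8 * e)"
proof -
  have "1/2 + e \<le> (1 + 8 * e) * (1/2 - e)"
    using assms mult_left_mono[OF assms(2), of "8 * e"] by (simp add: algebra_simps)
  hence "(1/2 + e) / (1/2 - e) \<le> 1 + 8 * e" using assms by (simp add: divide_le_eq)
  also have "\<dots> \<le> exp (8 * e)" by (rule exp_ge_add_one_self)
  finally show ?thesis .
qed

text \<open>Telescoping bound: 1/((x+1) ln(x+1)^2) \<le> 1/ln x - 1/ln(x+1) for x \<ge> 2, using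
  ln(x+1) - ln x \<ge> 1/(x+1).\<close>

lemma log_square_term_le_telescope:
  fixes x :: real
  assumes x2: "x \<ge> 2"
  shows "1 / ((x + 1) * (ln (x + 1))^2) \<le> 1 / ln x - 1 / ln (x + 1)"
proof -
  have l1: "ln x > 0" using x2 by simp
  have l12: "ln x \<le> ln (x+1)" using x2 by simp
  have d: "ln (x+1) - ln x \<ge> 1/(x+1)"
  proof -
    have "ln (x/(x+1)) \<le> x/(x+1) - 1" using x2 by (intro ln_le_minus_one) simp
    also have "\<dots> = - (1/(x+1))" using x2 by (simp add: field_simps)
    finally show ?thesis using x2 by (simp add: ln_div)
  qed
  have "1 / ((x + 1) * (ln (x + 1))^2) = (1/(x+1)) / (ln (x+1) * ln (x+1))"
    by (simp add: power2_eq_square)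
  also have "\<dots> \<le> (ln (x+1) - ln x) / (ln (x+1) * ln (x+1))"
    using d l1 l12 by (intro divide_right_mono) auto
  also have "\<dots> \<le> (ln (x+1) - ln x) / (ln x * ln (x+1))"
    using d l1 l12 by (intro divide_left_mono mult_right_mono mult_pos_pos) auto
  also have "\<dots> = 1 / ln x - 1 / ln (x+1)"
    using l1 l12 by (simp add: field_simps)
  finally show ?thesis .
qed

lemma log_square_sum_bounded:
  assumes "M \<ge> (2::nat)"
  shows "(\<Sum>m=M..k. 1 / ((real m + 1) * (ln (real m + 1))^2)) \<le> 1 / ln (real M)"
proof (cases "M \<le> k")
  case False thus ?thesis using assms by simp
next
  case True
  define f where "f = (\<lambda>i::nat. - 1 / ln (real i))"
  have "(\<Sum>m=M..k. 1 / ((real m + 1) * (ln (real m + 1))^2)) \<le> (\<Sum>m=M..k. f (Suc m) - f m)"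
  proof (rule sum_mono)
    fix m assume "m \<in> {M..k}"
    hence "real m \<ge> 2" using assms by simp
    from log_square_term_le_telescope[OF this]
    show "1 / ((real m + 1) * (ln (real m + 1))^2) \<le> f (Suc m) - f m"
      by (simp add: f_def add.commute)
  qed
  also have "\<dots> = f (Suc k) - f M" using True by (intro sum_Suc_diff) simp
  also have "\<dots> \<le> 1 / ln (real M)" unfolding f_def using True assms by simp
  finally show ?thesis .
qed

lemma odds_le_exp:
  assumes "a > 0" "m \<ge> 2" "real m + 1 \<ge> 4 * a"
  shows "0 \<le> odds a m \<and> odds a m \<le> exp (8 * (a * (1 / ((real m + 1) * (ln (real m + 1))^2))))"
proof -
  define e where "e = a / ((real m + 1) * (ln (real m + 1))^2)"
  have ln1: "ln (real m + 1) \<ge> 1"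
  proof -
    have "exp 1 \<le> (3::real)" using exp_le by simp
    thus ?thesis using assms(2) by (subst ln_ge_iff) auto
  qed
  have e0: "e \<ge> 0" unfolding e_def using assms(1) by simp
  have "e \<le> a / ((real m + 1) * 1)"
    unfolding e_def using assms(1,2) ln1
    by (intro divide_left_mono mult_left_mono) (auto simp: one_le_power)
  also have "\<dots> \<le> 1/4" using assms by (simp add: field_simps)
  finally have e4: "e \<le> 1/4" .
  have odds_e: "odds a m = (1/2 + e) / (1/2 - e)" unfolding odds_def pp_def qq_def e_def by simp
  have "(1/2 + e) / (1/2 - e) \<le> exp (8 * e)" using e0 e4 by (rule biased_odds_le_exp)
  moreover have "0 \<le> (1/2 + e) / (1/2 - e)" using e0 e4 by simp
  ultimately show ?thesis unfolding odds_e e_def by simp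
qed

lemma odds_tail_product_bounded:
  assumes "a > 0" "M \<ge> 2" "real M + 1 \<ge> 4 * a"
  shows "(\<Prod>m\<in>{M..k}. odds a m) \<le> exp (8 * (a / ln (real M)))"
proof -
  let ?t = "\<lambda>m::nat. 1 / ((real m + 1) * (ln (real m + 1))^2)"
  have "(\<Prod>m\<in>{M..k}. odds a m) \<le> (\<Prod>m\<in>{M..k}. exp (8 * (a * ?t m)))"
    using assms by (intro prod_mono odds_le_exp) auto
  also have "\<dots> = exp (8 * (a * (\<Sum>m\<in>{M..k}. ?t m)))"
    by (simp add: exp_sum sum_distrib_left)
  also have "\<dots> \<le> exp (8 * (a * (1 / ln (real M))))"
    using log_square_sum_bounded[OF assms(2), of k] assms(1)
    by (intro exp_mono mult_left_mono) auto
  finally show ?thesis by simp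
qed

theorem mainTheorem7:
  fixes a :: real and L :: nat
  assumes "a > 0"
    and "\<forall>m\<ge>L+1. pp a m < 1"
  shows "\<exists>C. \<forall>\<^sub>F k in sequentially. \<bar>bracket1 a L k / bracket2 a L k\<bar> \<le> C"
proof -
  \<comment> \<open>Threshold beyond which the tail estimate applies.\<close>
  define M where "M = max (L+1) (max 2 (nat \<lceil>4*a\<rceil>))"
  have M: "L + 1 \<le> M" "M \<ge> 2" "real M + 1 \<ge> 4 * a" unfolding M_def by linarith+
  define C where "C = (\<Prod>m\<in>{L+1..M-1}. odds a m) * exp (8 * (a / ln (real M)))"
  have "\<bar>bracket1 a L k / bracket2 a L k\<bar> \<le> C" if k: "k \<ge> M" for k
  proof -
    have odds_nonneg: "odds a m \<ge> 0" if "m \<ge> L+1" for m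
      using odds_ge_1[OF assms(1)] assms(2) that by force
    have split: "bracket1 a L k / bracket2 a L k
                 = (\<Prod>m\<in>{L+1..M-1}. odds a m) * (\<Prod>m\<in>{M..k}. odds a m)"
      using bracket_ratio[OF assms, of k] prod_interval_split[of L "M-1" k "odds a"] k M
      by (simp add: Suc_diff_Suc)
    have "(\<Prod>m\<in>{L+1..M-1}. odds a m) \<ge> 0" "(\<Prod>m\<in>{M..k}. odds a m) \<ge> 0"
      using M by (auto intro!: prod_nonneg odds_nonneg)
    thus ?thesis unfolding split C_def
      using odds_tail_product_bounded[OF assms(1) M(2,3), of k] by (simp add: mult_left_mono)
  qed
  thus ?thesis unfolding eventually_sequentially by blast
qed

end
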